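(* For all integers $M,N\ge2$, $\lim_{p\to\infty}\delta_p(M,N)=0$.
   Context: For integers $M,N,p\ge1$, $\delta_p(M,N)=\frac{1}{(MN)^p}\#\{(a,b)\in\mathbb Z_M^p\times\mathbb Z_N^p:\{(a_y,b_y)\}_{y=1}^p=\{(a_y,b_{y+1})\}_{y=1}^p\text{ as multisets}\}$, with $b_{p+1}=b_1$. *)

theory Defs
  imports Complex_Main "HOL-Library.FuncSet" "HOL-Library.Multiset"
begin

text \<open>Tuples in Z_M^p are represented as extensional functions {0..<p} -> {0..<M}
  (index y in 0..p-1 corresponds to y+1 in the paper; the cyclic successor is (y+1) mod p).\<close>

definition delta :: "nat \<Rightarrow> nat \<Rightarrow> nat \<Rightarrow> real" where
  "delta p M N =
     real (card {(a, b). a \<in> {0..<p} \<rightarrow>\<^sub>E {0..<M} \<and> b \<in> {0..<p} \<rightarrow>\<^sub>E {0..<N} \<and>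
        image_mset (\<lambda>y. (a y, b y)) (mset_set {0..<p})
        = image_mset (\<lambda>y. (a y, b ((y + 1) mod p))) (mset_set {0..<p})})
     / (real (M * N)) ^ p"

end

theory Submission
  imports Defs
begin

text \<open>Call an odd position i a switch of (a, b) if a (i - 1) \<noteq> 0, a i = 0 and b i \<in> {0, 1}.
  Equality of the two multisets forces the number of positions with (a i, b i) = (0, 0) to equal
  the number with (a i, b (i + 1)) = (0, 0). Flipping b between 0 and 1 at a switch changes the
  first count by one but neither the second count nor the set of switches, so among the 2^K
  configurations that differ only at K switches at most (K choose K div 2) are admissible, a
  fraction of at most 1 / sqrt (K + 1). On the other hand the odd positions are switches
  independently, each with probability 2 (M - 1) / (M^2 N) > 0, so configurations with fewer than
  m switches have exponentially small probability as p grows.\<close>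

lemma card_le_sum_over_fibres:
  fixes w :: "'a \<Rightarrow> real" and f :: "'a \<Rightarrow> 'b"
  assumes "finite X" and "A \<subseteq> X"
    and fibre: "\<And>x. x \<in> X \<Longrightarrow>
      real (card (A \<inter> {x' \<in> X. f x' = f x})) \<le> (\<Sum>x'\<in>{x' \<in> X. f x' = f x}. w x')"
  shows "real (card A) \<le> (\<Sum>x\<in>X. w x)"
proof -
  have "finite A" using assms finite_subset by blast
  have "real (card A) = (\<Sum>x\<in>A. 1)"
    by simp
  also have "\<dots> = (\<Sum>y\<in>f ` X. \<Sum>x\<in>{x \<in> A. f x = y}. 1)"
    using \<open>finite A\<close> \<open>finite X\<close> \<open>A \<subseteq> X\<close> by (intro sum.group[symmetric]) auto
  also have "\<dots> = (\<Sum>y\<in>f ` X. real (card (A \<inter> {x \<in> X. f x = y})))"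
    using \<open>A \<subseteq> X\<close> by (intro sum.cong refl) (auto intro: arg_cong[where f = card])
  also have "\<dots> \<le> (\<Sum>y\<in>f ` X. \<Sum>x\<in>{x \<in> X. f x = y}. w x)"
    using fibre by (intro sum_mono) auto
  also have "\<dots> = (\<Sum>x\<in>X. w x)"
    using \<open>finite X\<close> by (intro sum.group) auto
  finally show ?thesis .
qed

lemma count_image_mset_mset_set:
  "finite A \<Longrightarrow> count (image_mset f (mset_set A)) z = card {x \<in> A. f x = z}"
  by (simp add: count_image_mset Int_commute Collect_conj_eq vimage_def)

section \<open>Central binomial coefficients\<close>

definition central_binomial_ratio :: "nat \<Rightarrow> real" where
  "central_binomial_ratio k = real (k choose (k div 2)) / 2 ^ k"

lemma central_binomial_Suc:
  "Suc n * ((2 * Suc n) choose Suc n) = 2 * (2 * n + 1) * ((2 * n) choose n)"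
  by (metis Suc_eq_plus1 Suc_times_binomial Suc_times_binomial_add add_2_eq_Suc
      add_mult_distrib mult_Suc_right nat_mult_1 one_add_one)

lemma central_binomial_sq_le: "real ((2 * n) choose n) ^ 2 * real (2 * n + 1) \<le> 16 ^ n"
proof (induction n)
  case 0
  then show ?case by simp
next
  case (Suc n)
  define c where "c = real ((2 * n) choose n)"
  define c' where "c' = real ((2 * Suc n) choose Suc n)"
  have "real (Suc n) * c' = real (2 * (2 * n + 1)) * c"
    unfolding c_def c'_def of_nat_mult[symmetric] central_binomial_Suc ..
  then have rec: "(real n + 1) * c' = 2 * (2 * real n + 1) * c"
    by (simp add: algebra_simps)
  have "c' ^ 2 * (2 * real (Suc n) + 1) * (real n + 1) ^ 2
      = ((real n + 1) * c') ^ 2 * (2 * real n + 3)"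
    by (simp add: power2_eq_square algebra_simps)
  also have "\<dots> = 4 * (2 * real n + 1) * (2 * real n + 3) * (c ^ 2 * (2 * real n + 1))"
    unfolding rec by (simp add: power2_eq_square algebra_simps)
  also have "\<dots> \<le> 4 * (2 * real n + 1) * (2 * real n + 3) * 16 ^ n"
    using Suc.IH unfolding c_def by (intro mult_left_mono) (simp_all add: add.commute)
  also have "\<dots> \<le> 16 ^ Suc n * (real n + 1) ^ 2"
    by (simp add: power2_eq_square algebra_simps)
  finally show ?case
    unfolding c'_def by (simp add: mult_le_cancel_right_pos)
qed

lemma central_binomial_ratio_odd:
  "central_binomial_ratio (2 * n + 1) = central_binomial_ratio (2 * n + 2)"
proof -
  have "(2 * n + 2) choose (n + 1) = 2 * ((2 * n + 1) choose n)"
    using central_binomial_odd[of "2 * n + 1"] by simp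
  then show ?thesis
    unfolding central_binomial_ratio_def by simp
qed

lemma central_binomial_ratio_even: "central_binomial_ratio (2 * n) ^ 2 \<le> 1 / real (2 * n + 1)"
proof -
  have "((2::real) ^ (2 * n)) ^ 2 = 16 ^ n"
    by (simp add: power_mult power2_eq_square flip: power_mult_distrib)
  then show ?thesis
    using central_binomial_sq_le[of n]
    by (simp add: central_binomial_ratio_def power_divide field_simps)
qed

lemma central_binomial_ratio_sq_le: "central_binomial_ratio k ^ 2 \<le> 1 / (real k + 1)"
proof (cases "even k")
  case True
  then obtain n where "k = 2 * n" by blast
  then show ?thesis using central_binomial_ratio_even[of n] by (simp add: add.commute)
next
  case False
  then obtain n where k: "k = 2 * n + 1" using oddE by blast
  have "central_binomial_ratio k ^ 2 \<le> 1 / real (2 * (n + 1) + 1)"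
    using central_binomial_ratio_even[of "n + 1"] central_binomial_ratio_odd[of n] k
    by (simp add: algebra_simps)
  also have "\<dots> \<le> 1 / (real k + 1)"
    using k by (simp add: field_simps)
  finally show ?thesis .
qed

lemma central_binomial_ratio_nonneg: "0 \<le> central_binomial_ratio k"
  by (simp add: central_binomial_ratio_def)

lemma central_binomial_ratio_le_1: "central_binomial_ratio k \<le> 1"
proof -
  have "central_binomial_ratio k ^ 2 \<le> 1"
    using central_binomial_ratio_sq_le[of k] order_trans by fastforce
  then show ?thesis
    using central_binomial_ratio_nonneg by (simp add: power_le_one_iff)
qed

lemma central_binomial_ratio_LIMSEQ: "central_binomial_ratio \<longlonglongrightarrow> 0"
proof -
  have "(\<lambda>k. central_binomial_ratio k ^ 2) \<longlonglongrightarrow> 0"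
  proof (rule tendsto_sandwich[OF _ _ tendsto_const LIMSEQ_inverse_real_of_nat])
    show "\<forall>\<^sub>F k in sequentially. central_binomial_ratio k ^ 2 \<le> inverse (real (Suc k))"
      using central_binomial_ratio_sq_le by (simp add: inverse_eq_divide add.commute)
  qed simp
  then have "(\<lambda>k. sqrt (central_binomial_ratio k ^ 2)) \<longlonglongrightarrow> sqrt 0"
    by (rule tendsto_real_sqrt)
  then show ?thesis
    using central_binomial_ratio_nonneg by simp
qed

lemma card_subsets_card_le:
  assumes "finite C"
  shows "real (card {T. T \<subseteq> C \<and> card T = s}) \<le> 2 ^ card C * central_binomial_ratio (card C)"
  using binomial_maximum[of "card C" s]
  by (simp add: n_subsets[OF assms] central_binomial_ratio_def)

section \<open>Configurations and switches\<close>

type_synonym config = "(nat \<Rightarrow> nat) \<times> (nat \<Rightarrow> nat)"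

definition configs :: "nat \<Rightarrow> nat \<Rightarrow> nat \<Rightarrow> config set" where
  "configs p M N = ({0..<p} \<rightarrow>\<^sub>E {0..<M}) \<times> ({0..<p} \<rightarrow>\<^sub>E {0..<N})"

lemma finite_configs [simp]: "finite (configs p M N)"
  unfolding configs_def by (intro finite_cartesian_product finite_PiE) auto

lemma card_configs: "card (configs p M N) = (M * N) ^ p"
  unfolding configs_def by (simp add: card_cartesian_product card_PiE power_mult_distrib)

definition zero_pairs :: "nat \<Rightarrow> (nat \<Rightarrow> nat) \<Rightarrow> (nat \<Rightarrow> nat) \<Rightarrow> nat" where
  "zero_pairs p a b = card {i \<in> {0..<p}. a i = 0 \<and> b i = 0}"

definition shifted_zero_pairs :: "nat \<Rightarrow> (nat \<Rightarrow> nat) \<Rightarrow> (nat \<Rightarrow> nat) \<Rightarrow> nat" where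
  "shifted_zero_pairs p a b = card {i \<in> {0..<p}. a i = 0 \<and> b ((i + 1) mod p) = 0}"

definition balanced :: "nat \<Rightarrow> nat \<Rightarrow> nat \<Rightarrow> config set" where
  "balanced p M N = {(a, b) \<in> configs p M N. zero_pairs p a b = shifted_zero_pairs p a b}"

lemma delta_nonneg: "0 \<le> delta p M N"
  by (simp add: delta_def)

lemma delta_le_balanced:
  "delta p M N \<le> real (card (balanced p M N)) / real (card (configs p M N))"
proof -
  let ?G = "{(a, b). a \<in> {0..<p} \<rightarrow>\<^sub>E {0..<M} \<and> b \<in> {0..<p} \<rightarrow>\<^sub>E {0..<N} \<and>
        image_mset (\<lambda>y. (a y, b y)) (mset_set {0..<p})
        = image_mset (\<lambda>y. (a y, b ((y + 1) mod p))) (mset_set {0..<p})}"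
  have "?G \<subseteq> balanced p M N"
  proof clarify
    fix a b
    assume "a \<in> {0..<p} \<rightarrow>\<^sub>E {0..<M}" "b \<in> {0..<p} \<rightarrow>\<^sub>E {0..<N}"
      and eq: "image_mset (\<lambda>y. (a y, b y)) (mset_set {0..<p})
        = image_mset (\<lambda>y. (a y, b ((y + 1) mod p))) (mset_set {0..<p})"
    moreover have "zero_pairs p a b = shifted_zero_pairs p a b"
      using arg_cong[OF eq, of "\<lambda>X. count X (0, 0)"]
      by (simp add: count_image_mset_mset_set zero_pairs_def shifted_zero_pairs_def)
    ultimately show "(a, b) \<in> balanced p M N"
      by (simp add: balanced_def configs_def)
  qed
  then have "card ?G \<le> card (balanced p M N)"
    by (intro card_mono) (auto simp: balanced_def intro: finite_subset[OF _ finite_configs])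
  then show ?thesis
    unfolding delta_def card_configs by (simp add: divide_right_mono)
qed

definition switchable :: "(nat \<Rightarrow> nat) \<Rightarrow> (nat \<Rightarrow> nat) \<Rightarrow> nat \<Rightarrow> bool" where
  "switchable a b i \<longleftrightarrow> a (i - 1) \<noteq> 0 \<and> a i = 0 \<and> b i < 2"

text \<open>Only odd positions are used: then i - 1 is a genuine predecessor, the coordinates that
  decide whether two different positions are switches are disjoint, and the wrap-around
  position 0 is never a switch.\<close>

definition switches :: "nat \<Rightarrow> (nat \<Rightarrow> nat) \<Rightarrow> (nat \<Rightarrow> nat) \<Rightarrow> nat set" where
  "switches p a b = {i \<in> {0..<p}. odd i \<and> switchable a b i}"

definition clear_switches :: "nat \<Rightarrow> (nat \<Rightarrow> nat) \<Rightarrow> (nat \<Rightarrow> nat) \<Rightarrow> nat \<Rightarrow> nat" where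
  "clear_switches p a b i = (if i \<in> switches p a b then 0 else b i)"

definition set_switches :: "(nat \<Rightarrow> nat) \<Rightarrow> nat set \<Rightarrow> nat \<Rightarrow> nat" where
  "set_switches b T i = (if i \<in> T then 1 else b i)"

definition cleared :: "nat \<Rightarrow> config \<Rightarrow> config" where
  "cleared p x = (fst x, clear_switches p (fst x) (snd x))"

lemma switches_subset: "switches p a b \<subseteq> {0..<p}"
  by (auto simp: switches_def)

lemma finite_switches [simp]: "finite (switches p a b)"
  using finite_subset[OF switches_subset] by blast

lemma switches_cong: "(\<And>i. b' i < 2 \<longleftrightarrow> b i < 2) \<Longrightarrow> switches p a b' = switches p a b"
  by (simp add: switches_def switchable_def)

lemma switches_clear_switches: "switches p a (clear_switches p a b) = switches p a b"
  by (rule switches_cong) (auto simp: clear_switches_def switches_def switchable_def)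

lemma switches_set_switches:
  "T \<subseteq> switches p a b \<Longrightarrow> switches p a (set_switches b T) = switches p a b"
  by (rule switches_cong) (auto simp: set_switches_def switches_def switchable_def)

lemma clear_switches_set_switches:
  assumes "T \<subseteq> switches p a b"
  shows "clear_switches p a (set_switches (clear_switches p a b) T) = clear_switches p a b"
proof -
  have sw: "switches p a (set_switches (clear_switches p a b) T) = switches p a b"
    using assms by (simp add: switches_set_switches switches_clear_switches)
  show ?thesis
  proof
    fix i
    show "clear_switches p a (set_switches (clear_switches p a b) T) i = clear_switches p a b i"
      using assms by (subst clear_switches_def) (auto simp: sw set_switches_def clear_switches_def)
  qed
qed

lemma set_switches_clear_switches:
  "set_switches (clear_switches p a b) {i \<in> switches p a b. b i = 1} = b"
  by (auto simp: set_switches_def clear_switches_def switches_def switchable_def)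

lemma inj_on_set_switches:
  "inj_on (set_switches (clear_switches p a b)) (Pow (switches p a b))"
proof (rule inj_onI)
  fix S T
  assume "S \<in> Pow (switches p a b)" "T \<in> Pow (switches p a b)"
    and eq: "set_switches (clear_switches p a b) S = set_switches (clear_switches p a b) T"
  show "S = T"
  proof (rule set_eqI)
    fix i
    show "i \<in> S \<longleftrightarrow> i \<in> T"
      using fun_cong[OF eq, of i] \<open>S \<in> _\<close> \<open>T \<in> _\<close>
      by (auto simp: set_switches_def clear_switches_def split: if_splits)
  qed
qed

lemma zero_pairs_set_switches:
  assumes "T \<subseteq> switches p a b"
  shows "zero_pairs p a (set_switches (clear_switches p a b) T) + card T
       = zero_pairs p a (clear_switches p a b)"
proof -
  let ?Z = "{i \<in> {0..<p}. a i = 0 \<and> clear_switches p a b i = 0}"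
  have "T \<subseteq> ?Z"
    using assms by (auto simp: switches_def switchable_def clear_switches_def)
  moreover have "{i \<in> {0..<p}. a i = 0 \<and> set_switches (clear_switches p a b) T i = 0} = ?Z - T"
    by (auto simp: set_switches_def)
  ultimately show ?thesis
    unfolding zero_pairs_def
    by (simp add: card_Diff_subset finite_subset le_add_diff_inverse2 card_mono)
qed

lemma shifted_zero_pairs_set_switches:
  assumes "T \<subseteq> switches p a b"
  shows "shifted_zero_pairs p a (set_switches b' T) = shifted_zero_pairs p a b'"
proof -
  have "(i + 1) mod p \<notin> T" if "i < p" "a i = 0" for i
  proof
    assume "(i + 1) mod p \<in> T"
    then have sw: "(i + 1) mod p \<in> switches p a b" using assms by blast
    show False
    proof (cases "i + 1 < p")
      case True
      then show False using sw \<open>a i = 0\<close> by (simp add: switches_def switchable_def)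
    next
      case False
      then have "i + 1 = p" using \<open>i < p\<close> by simp
      then have "(i + 1) mod p = 0" by simp
      then show False using sw by (simp add: switches_def)
    qed
  qed
  then show ?thesis
    unfolding shifted_zero_pairs_def set_switches_def by (auto intro!: arg_cong[where f = card])
qed

lemma cleared_fibre:
  assumes "(a, b) \<in> configs p M N" and "N \<ge> 2"
  shows "{x \<in> configs p M N. cleared p x = cleared p (a, b)}
       = (\<lambda>T. (a, set_switches (clear_switches p a b) T)) ` Pow (switches p a b)"
    (is "?F = ?g ` _")
proof
  show "?F \<subseteq> ?g ` Pow (switches p a b)"
  proof
    fix x
    assume "x \<in> ?F"
    then obtain b' where x: "x = (a, b')" and clear: "clear_switches p a b' = clear_switches p a b"
      by (cases x) (simp add: cleared_def)
    have "switches p a b' = switches p a b"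
      by (metis clear switches_clear_switches)
    then have "b' = set_switches (clear_switches p a b) {i \<in> switches p a b. b' i = 1}"
      using set_switches_clear_switches[of p a b'] clear by simp
    then show "x \<in> ?g ` Pow (switches p a b)"
      using x by blast
  qed
  show "?g ` Pow (switches p a b) \<subseteq> ?F"
  proof (rule image_subsetI)
    fix T
    assume "T \<in> Pow (switches p a b)"
    then have T: "T \<subseteq> switches p a b" by simp
    have "clear_switches p a b \<in> {0..<p} \<rightarrow>\<^sub>E {0..<N}"
      using assms switches_subset[of p a b]
      by (auto simp: configs_def clear_switches_def PiE_def Pi_def extensional_def)
    then have "set_switches (clear_switches p a b) T \<in> {0..<p} \<rightarrow>\<^sub>E {0..<N}"
      using T switches_subset[of p a b] \<open>N \<ge> 2\<close>
      by (auto simp: set_switches_def PiE_def Pi_def extensional_def)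
    then show "?g T \<in> ?F"
      using assms T by (simp add: configs_def cleared_def clear_switches_set_switches)
  qed
qed

lemma card_balanced_fibre_le:
  assumes "(a, b) \<in> configs p M N" and "N \<ge> 2"
  defines "F \<equiv> {x \<in> configs p M N. cleared p x = cleared p (a, b)}"
  shows "real (card (balanced p M N \<inter> F))
       \<le> (\<Sum>(a', b')\<in>F. central_binomial_ratio (card (switches p a' b')))"
proof -
  define C where "C = switches p a b"
  define c where "c = clear_switches p a b"
  define s where "s = zero_pairs p a c - shifted_zero_pairs p a c"
  define g where "g T = (a, set_switches c T)" for T
  have F: "F = g ` Pow C"
    unfolding F_def C_def c_def g_def by (rule cleared_fibre[OF assms(1,2)])
  have inj: "inj_on g (Pow C)"
    using inj_on_set_switches[of p a b] unfolding g_def C_def c_def inj_on_def by simp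
  have "balanced p M N \<inter> F \<subseteq> g ` {T. T \<subseteq> C \<and> card T = s}"
  proof
    fix x
    assume x: "x \<in> balanced p M N \<inter> F"
    then obtain T where T: "T \<subseteq> C" and xT: "x = g T"
      using F by blast
    have "zero_pairs p a (set_switches c T) + card T = zero_pairs p a c"
      using T unfolding C_def c_def by (rule zero_pairs_set_switches)
    moreover have "shifted_zero_pairs p a (set_switches c T) = shifted_zero_pairs p a c"
      using T unfolding C_def by (rule shifted_zero_pairs_set_switches)
    moreover have "zero_pairs p a (set_switches c T) = shifted_zero_pairs p a (set_switches c T)"
      using x xT by (simp add: balanced_def g_def)
    ultimately have "card T = s"
      unfolding s_def by linarith
    then show "x \<in> g ` {T. T \<subseteq> C \<and> card T = s}"
      using T xT by blast
  qed
  moreover have fin: "finite {T. T \<subseteq> C \<and> card T = s}"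
    unfolding C_def by (rule finite_subset[of _ "Pow (switches p a b)"]) auto
  ultimately have "card (balanced p M N \<inter> F) \<le> card {T. T \<subseteq> C \<and> card T = s}"
    using card_mono card_image_le le_trans finite_imageI by meson
  then have "real (card (balanced p M N \<inter> F)) \<le> real (card {T. T \<subseteq> C \<and> card T = s})"
    by simp
  also have "\<dots> \<le> 2 ^ card C * central_binomial_ratio (card C)"
    by (rule card_subsets_card_le) (simp add: C_def)
  also have "(2::real) ^ card C = real (card F)"
    using F inj by (simp add: card_image card_Pow C_def)
  also have "real (card F) * central_binomial_ratio (card C)
           = (\<Sum>(a', b')\<in>F. central_binomial_ratio (card (switches p a' b')))"
  proof -
    have "(\<Sum>(a', b')\<in>F. central_binomial_ratio (card (switches p a' b')))
        = (\<Sum>x\<in>F. central_binomial_ratio (card C))"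
      unfolding F by (intro sum.cong)
        (auto simp: g_def C_def c_def switches_set_switches switches_clear_switches)
    then show ?thesis by simp
  qed
  finally show ?thesis .
qed

lemma card_balanced_le:
  assumes "N \<ge> 2"
  shows "real (card (balanced p M N))
       \<le> (\<Sum>(a, b)\<in>configs p M N. central_binomial_ratio (card (switches p a b)))"
proof (rule card_le_sum_over_fibres[where f = "cleared p"])
  show "balanced p M N \<subseteq> configs p M N"
    by (auto simp: balanced_def)
qed (use card_balanced_fibre_le[OF _ assms] in \<open>auto simp: split_def\<close>)

section \<open>Independence of switches\<close>

definition avoiding_switches :: "nat \<Rightarrow> nat \<Rightarrow> nat \<Rightarrow> nat set \<Rightarrow> config set" where
  "avoiding_switches p M N S = {(a, b) \<in> configs p M N. \<forall>i\<in>S. \<not> switchable a b i}"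

definition switch_prob :: "nat \<Rightarrow> nat \<Rightarrow> real" where
  "switch_prob M N = 2 * (real M - 1) / (real M * real M * real N)"

definition refill :: "nat \<Rightarrow> config \<Rightarrow> nat \<times> nat \<times> nat \<Rightarrow> config" where
  "refill j x v = ((fst x)(j - 1 := fst v, j := fst (snd v)), (snd x)(j := snd (snd v)))"

lemma switch_prob_pos: "M \<ge> 2 \<Longrightarrow> N \<ge> 1 \<Longrightarrow> 0 < switch_prob M N"
  by (simp add: switch_prob_def)

lemma switch_prob_le_1:
  assumes "M \<ge> 1" and "N \<ge> 2"
  shows "switch_prob M N \<le> 1"
proof -
  have "2 * (real M - 1) \<le> real M * 2"
    by simp
  also have "\<dots> \<le> real M * (real M * real N)"
    using assms by (intro mult_left_mono) (auto intro: order_trans[OF _ mult_mono[of 1 _ 2]])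
  finally show ?thesis
    using assms by (simp add: switch_prob_def divide_le_eq_1 mult.assoc)
qed

lemma refill_refill: "odd j \<Longrightarrow> refill j (refill j x v) w = refill j x w"
  by (auto simp: refill_def fun_eq_iff elim: oddE)

lemma refill_coordinates: "refill j x (fst x (j - 1), fst x j, snd x j) = x"
  by (simp add: refill_def prod_eq_iff)

lemma coordinates_refill:
  "odd j \<Longrightarrow> (fst (refill j x v) (j - 1), fst (refill j x v) j, snd (refill j x v) j) = v"
  by (auto simp: refill_def elim!: oddE)

lemma inj_refill: "odd j \<Longrightarrow> inj (refill j x)"
  by (metis coordinates_refill injI)

lemma refill_in_configs:
  assumes "x \<in> configs p M N" and "odd j" and "j < p" and "v \<in> {0..<M} \<times> {0..<M} \<times> {0..<N}"
  shows "refill j x v \<in> configs p M N"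
  using assms by (auto simp: configs_def refill_def PiE_def Pi_def extensional_def elim!: oddE)

lemma switchable_refill_other:
  assumes "odd i" and "odd j" and "i \<noteq> j"
  shows "switchable (fst (refill j x v)) (snd (refill j x v)) i = switchable (fst x) (snd x) i"
  using assms by (auto simp: switchable_def refill_def elim!: oddE)

lemma switchable_refill_self:
  "odd j \<Longrightarrow> switchable (fst (refill j x v)) (snd (refill j x v)) j
     \<longleftrightarrow> fst v \<noteq> 0 \<and> fst (snd v) = 0 \<and> snd (snd v) < 2"
  by (auto simp: switchable_def refill_def elim!: oddE)

lemma mem_avoiding_switches:
  "x \<in> avoiding_switches p M N S
     \<longleftrightarrow> x \<in> configs p M N \<and> (\<forall>i\<in>S. \<not> switchable (fst x) (snd x) i)"
  by (cases x) (simp add: avoiding_switches_def)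

lemma refill_fibre:
  assumes x: "x \<in> avoiding_switches p M N S"
    and j: "odd j" "j < p" "j \<notin> S" and S: "\<forall>i\<in>S. odd i"
  shows "{x' \<in> avoiding_switches p M N S. refill j x' (0, 0, 0) = refill j x (0, 0, 0)}
       = refill j x ` ({0..<M} \<times> {0..<M} \<times> {0..<N})"
proof
  show "{x' \<in> avoiding_switches p M N S. refill j x' (0, 0, 0) = refill j x (0, 0, 0)}
      \<subseteq> refill j x ` ({0..<M} \<times> {0..<M} \<times> {0..<N})"
  proof clarify
    fix x'
    assume x': "x' \<in> avoiding_switches p M N S"
      and eq: "refill j x' (0, 0, 0) = refill j x (0, 0, 0)"
    define v where "v = (fst x' (j - 1), fst x' j, snd x' j)"
    have "x' = refill j (refill j x' (0, 0, 0)) v"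
      using refill_coordinates[of j x'] j by (simp add: refill_refill v_def)
    also have "\<dots> = refill j x v"
      using eq j by (simp add: refill_refill)
    finally have "x' = refill j x v" .
    moreover have "v \<in> {0..<M} \<times> {0..<M} \<times> {0..<N}"
      using x' j unfolding v_def mem_avoiding_switches configs_def
      by (auto simp: PiE_def Pi_def)
    ultimately show "x' \<in> refill j x ` ({0..<M} \<times> {0..<M} \<times> {0..<N})"
      by blast
  qed
  show "refill j x ` ({0..<M} \<times> {0..<M} \<times> {0..<N})
      \<subseteq> {x' \<in> avoiding_switches p M N S. refill j x' (0, 0, 0) = refill j x (0, 0, 0)}"
  proof (rule image_subsetI)
    fix v
    assume v: "v \<in> {0..<M} \<times> {0..<M} \<times> {0..<N}"
    have "refill j x v \<in> configs p M N"
      using x j v by (intro refill_in_configs) (simp_all add: mem_avoiding_switches)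
    moreover have "\<not> switchable (fst (refill j x v)) (snd (refill j x v)) i" if "i \<in> S" for i
      using that x j S by (subst switchable_refill_other) (auto simp: mem_avoiding_switches)
    ultimately show "refill j x v \<in> {x' \<in> avoiding_switches p M N S.
        refill j x' (0, 0, 0) = refill j x (0, 0, 0)}"
      using j by (simp add: mem_avoiding_switches refill_refill)
  qed
qed

lemma card_diff_switch_triples:
  assumes "M \<ge> 1" and "N \<ge> 2"
  defines "V \<equiv> {0..<M} \<times> {0..<M} \<times> {0..<N}"
  shows "real (card {v \<in> V. \<not> (fst v \<noteq> 0 \<and> fst (snd v) = 0 \<and> snd (snd v) < 2)})
       = (1 - switch_prob M N) * real (card V)"
proof -
  define W where "W = {1..<M} \<times> {0::nat} \<times> {0..<2::nat}"
  have WV: "W \<subseteq> V"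
    using \<open>N \<ge> 2\<close> by (auto simp: V_def W_def)
  have "{v \<in> V. \<not> (fst v \<noteq> 0 \<and> fst (snd v) = 0 \<and> snd (snd v) < 2)} = V - W"
    by (auto simp: V_def W_def)
  moreover have "finite V"
    by (simp add: V_def)
  then have "real (card (V - W)) = real (card V) - real (card W)"
    using WV by (simp add: card_Diff_subset finite_subset of_nat_diff card_mono)
  also have "\<dots> = real M * real M * real N - 2 * (real M - 1)"
    using \<open>M \<ge> 1\<close> by (simp add: V_def W_def of_nat_diff)
  also have "\<dots> = (1 - switch_prob M N) * real (card V)"
    using assms by (simp add: switch_prob_def V_def field_simps)
  finally show ?thesis
    by simp
qed

lemma card_refill_fibre_insert_le:
  assumes "M \<ge> 1" and "N \<ge> 2" and x: "x \<in> avoiding_switches p M N S"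
    and j: "odd j" "j < p" "j \<notin> S" and S: "\<forall>i\<in>S. odd i"
  defines "F \<equiv> {x' \<in> avoiding_switches p M N S. refill j x' (0, 0, 0) = refill j x (0, 0, 0)}"
  shows "real (card (avoiding_switches p M N (insert j S) \<inter> F))
       \<le> (1 - switch_prob M N) * real (card F)"
proof -
  define V where "V = {0..<M} \<times> {0..<M} \<times> {0..<N}"
  define V' where "V' = {v \<in> V. \<not> (fst v \<noteq> 0 \<and> fst (snd v) = 0 \<and> snd (snd v) < 2)}"
  have inj: "inj_on (refill j x) A" for A
    using inj_refill[OF \<open>odd j\<close>] by (rule inj_on_subset) simp
  have F: "F = refill j x ` V"
    unfolding F_def V_def using x j S by (rule refill_fibre)
  have "avoiding_switches p M N (insert j S) \<inter> F \<subseteq> refill j x ` V'"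
  proof
    fix x'
    assume x': "x' \<in> avoiding_switches p M N (insert j S) \<inter> F"
    then obtain v where v: "v \<in> V" and x'v: "x' = refill j x v"
      using F by auto
    have "\<not> switchable (fst x') (snd x') j"
      using x' by (simp add: mem_avoiding_switches)
    then show "x' \<in> refill j x ` V'"
      using v unfolding x'v switchable_refill_self[OF \<open>odd j\<close>] V'_def by blast
  qed
  then have "card (avoiding_switches p M N (insert j S) \<inter> F) \<le> card (refill j x ` V')"
    by (intro card_mono finite_imageI) (simp_all add: V'_def V_def)
  also have "\<dots> = card V'"
    using inj by (rule card_image)
  finally have "real (card (avoiding_switches p M N (insert j S) \<inter> F)) \<le> real (card V')"
    by simp
  also have "\<dots> = (1 - switch_prob M N) * real (card V)"
    unfolding V'_def V_def using assms(1,2) by (rule card_diff_switch_triples)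
  also have "card V = card F"
    using F inj by (simp add: card_image)
  finally show ?thesis .
qed

lemma card_avoiding_switches_insert_le:
  assumes "M \<ge> 1" and "N \<ge> 2" and "odd j" "j < p" "j \<notin> S" and "\<forall>i\<in>S. odd i"
  shows "real (card (avoiding_switches p M N (insert j S)))
       \<le> (1 - switch_prob M N) * real (card (avoiding_switches p M N S))"
proof -
  have "real (card (avoiding_switches p M N (insert j S)))
      \<le> (\<Sum>x\<in>avoiding_switches p M N S. 1 - switch_prob M N)"
  proof (rule card_le_sum_over_fibres[where f = "\<lambda>x. refill j x (0, 0, 0)"])
    show "finite (avoiding_switches p M N S)"
      by (auto simp: mem_avoiding_switches intro: finite_subset[OF _ finite_configs])
    show "avoiding_switches p M N (insert j S) \<subseteq> avoiding_switches p M N S"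
      by (auto simp: mem_avoiding_switches)
  qed (use card_refill_fibre_insert_le[OF assms(1,2) _ assms(3-6)] in \<open>simp add: mult.commute\<close>)
  then show ?thesis
    by (simp add: mult.commute)
qed

lemma card_avoiding_switches_le:
  assumes "M \<ge> 1" and "N \<ge> 2" and "finite S" and "\<forall>i\<in>S. odd i \<and> i < p"
  shows "real (card (avoiding_switches p M N S))
       \<le> (1 - switch_prob M N) ^ card S * real (card (configs p M N))"
  using \<open>finite S\<close> \<open>\<forall>i\<in>S. odd i \<and> i < p\<close>
proof (induction S rule: finite_induct)
  case empty
  then show ?case
    by (simp add: avoiding_switches_def)
next
  case (insert j S)
  have "real (card (avoiding_switches p M N (insert j S)))
      \<le> (1 - switch_prob M N) * real (card (avoiding_switches p M N S))"
    using insert assms(1,2) by (intro card_avoiding_switches_insert_le) auto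
  also have "\<dots> \<le> (1 - switch_prob M N)
      * ((1 - switch_prob M N) ^ card S * real (card (configs p M N)))"
    using insert switch_prob_le_1[OF assms(1,2)] by (intro mult_left_mono) auto
  finally show ?case
    using insert by simp
qed

definition odd_block :: "nat \<Rightarrow> nat \<Rightarrow> nat set" where
  "odd_block g r = (\<lambda>j. 2 * j + 1) ` {r * g..<(r + 1) * g}"

lemma card_odd_block: "card (odd_block g r) = g"
  unfolding odd_block_def by (subst card_image) (auto intro: inj_onI)

lemma odd_block_subset:
  assumes "r < m" and "m * g \<le> p div 2"
  shows "odd_block g r \<subseteq> {i. odd i \<and> i < p}"
proof
  fix i
  assume "i \<in> odd_block g r"
  then obtain j where i: "i = 2 * j + 1" and "j < (r + 1) * g"
    unfolding odd_block_def by auto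
  moreover have "(r + 1) * g \<le> m * g"
    using assms by (intro mult_right_mono) auto
  ultimately show "i \<in> {i. odd i \<and> i < p}"
    using assms by auto
qed

lemma odd_block_index: "i \<in> odd_block g r \<Longrightarrow> i div 2 div g = r"
  unfolding odd_block_def by (auto simp: div_nat_eqI mult.commute)

lemma few_switches_avoid_block:
  assumes "card (switches p a b) < m" and "m * g \<le> p div 2"
  shows "\<exists>r<m. \<forall>i\<in>odd_block g r. \<not> switchable a b i"
proof (rule ccontr)
  assume "\<not> ?thesis"
  then have hit: "odd_block g r \<inter> switches p a b \<noteq> {}" if "r < m" for r
    using that odd_block_subset[OF _ assms(2)] by (fastforce simp: switches_def)
  have "m = (\<Sum>r<m. 1)"
    by simp
  also have "\<dots> \<le> (\<Sum>r<m. card (odd_block g r \<inter> switches p a b))"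
    using hit by (intro sum_mono) (simp add: Suc_le_eq card_gt_0_iff)
  also have "\<dots> = card (\<Union>r<m. odd_block g r \<inter> switches p a b)"
    by (rule card_UN_disjoint[symmetric]) (auto dest: odd_block_index)
  also have "\<dots> \<le> card (switches p a b)"
    by (intro card_mono) auto
  finally show False
    using assms(1) by simp
qed

lemma card_few_switches_le:
  assumes "M \<ge> 1" and "N \<ge> 2" and "m * g \<le> p div 2"
  shows "real (card {(a, b) \<in> configs p M N. card (switches p a b) < m})
       \<le> real m * (1 - switch_prob M N) ^ g * real (card (configs p M N))"
proof -
  have "{(a, b) \<in> configs p M N. card (switches p a b) < m}
      \<subseteq> (\<Union>r<m. avoiding_switches p M N (odd_block g r))"
    using few_switches_avoid_block[OF _ assms(3)] by (fastforce simp: avoiding_switches_def)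
  then have "card {(a, b) \<in> configs p M N. card (switches p a b) < m}
      \<le> card (\<Union>r<m. avoiding_switches p M N (odd_block g r))"
    by (intro card_mono finite_UN_I)
      (auto simp: mem_avoiding_switches intro: finite_subset[OF _ finite_configs])
  also have "\<dots> \<le> (\<Sum>r<m. card (avoiding_switches p M N (odd_block g r)))"
    by (rule card_UN_le) simp
  finally have "real (card {(a, b) \<in> configs p M N. card (switches p a b) < m})
      \<le> (\<Sum>r<m. real (card (avoiding_switches p M N (odd_block g r))))"
    by (simp flip: of_nat_sum)
  also have "\<dots> \<le> (\<Sum>r<m. (1 - switch_prob M N) ^ g * real (card (configs p M N)))"
  proof (rule sum_mono)
    fix r
    assume "r \<in> {..<m}"
    then have "odd_block g r \<subseteq> {i. odd i \<and> i < p}"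
      using assms(3) by (intro odd_block_subset) auto
    then have "real (card (avoiding_switches p M N (odd_block g r)))
        \<le> (1 - switch_prob M N) ^ card (odd_block g r) * real (card (configs p M N))"
      by (intro card_avoiding_switches_le[OF assms(1,2)]) (auto simp: odd_block_def)
    then show "real (card (avoiding_switches p M N (odd_block g r)))
        \<le> (1 - switch_prob M N) ^ g * real (card (configs p M N))"
      by (simp add: card_odd_block)
  qed
  finally show ?thesis
    by simp
qed

lemma delta_le:
  assumes "M \<ge> 1" and "N \<ge> 2" and ratio: "\<forall>k\<ge>m. central_binomial_ratio k \<le> e"
    and "m * g \<le> p div 2"
  shows "delta p M N \<le> e + real m * (1 - switch_prob M N) ^ g"
proof -
  let ?C = "configs p M N"
  let ?few = "{(a, b) \<in> ?C. card (switches p a b) < m}"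
  have "0 \<le> e"
    using ratio central_binomial_ratio_nonneg order_trans by blast
  have "real (card (balanced p M N))
      \<le> (\<Sum>(a, b)\<in>?C. central_binomial_ratio (card (switches p a b)))"
    using \<open>N \<ge> 2\<close> by (rule card_balanced_le)
  also have "\<dots> \<le> (\<Sum>(a, b)\<in>?C. e + of_bool (card (switches p a b) < m))"
    using ratio central_binomial_ratio_le_1 \<open>0 \<le> e\<close>
    by (intro sum_mono) (auto simp: not_less add_increasing)
  also have "\<dots> = e * real (card ?C) + real (card ?few)"
    by (simp add: sum.distrib split_def Int_def)
  also have "\<dots> \<le> e * real (card ?C) + real m * (1 - switch_prob M N) ^ g * real (card ?C)"
    using card_few_switches_le[OF assms(1,2,4)] by simp
  finally have bound: "real (card (balanced p M N))
      \<le> (e + real m * (1 - switch_prob M N) ^ g) * real (card ?C)"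
    by (simp add: algebra_simps)
  have "0 < real (card ?C)"
    using assms by (simp add: card_configs)
  then have "real (card (balanced p M N)) / real (card ?C) \<le> e + real m * (1 - switch_prob M N) ^ g"
    using bound by (simp add: pos_divide_le_eq)
  then show ?thesis
    using delta_le_balanced[of p M N] by linarith
qed

theorem theorem8p4:
  fixes M N :: nat
  assumes "M \<ge> 2" and "N \<ge> 2"
  shows "(\<lambda>p. delta p M N) \<longlonglongrightarrow> 0"
proof (rule LIMSEQ_I)
  fix r :: real
  assume "r > 0"
  define q where "q = switch_prob M N"
  have q: "0 < q" "q \<le> 1"
    using assms switch_prob_pos switch_prob_le_1 unfolding q_def by auto
  have "\<forall>\<^sub>F k in sequentially. central_binomial_ratio k < r / 2"
    using \<open>r > 0\<close> by (intro order_tendstoD(2)[OF central_binomial_ratio_LIMSEQ]) simp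
  then obtain m where m: "\<forall>k\<ge>m. central_binomial_ratio k \<le> r / 2"
    unfolding eventually_sequentially by (meson less_imp_le)
  have "(\<lambda>g. real m * (1 - q) ^ g) \<longlonglongrightarrow> 0"
    using q by (intro tendsto_mult_right_zero LIMSEQ_power_zero) auto
  then obtain g where g: "real m * (1 - q) ^ g < r / 2"
    using order_tendstoD(2)[of _ 0 sequentially "r / 2"] \<open>r > 0\<close>
    by (fastforce simp: eventually_sequentially)
  show "\<exists>p0. \<forall>p\<ge>p0. norm (delta p M N - 0) < r"
  proof (intro exI allI impI)
    fix p
    assume "p \<ge> 2 * (m * g)"
    then have "delta p M N \<le> r / 2 + real m * (1 - q) ^ g"
      using assms m unfolding q_def by (intro delta_le) auto
    then show "norm (delta p M N - 0) < r"
      using g delta_nonneg by simp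
  qed
qed

end
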